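(* Let the language contain a constant and let $t_1,t_2,\dots$ be a fixed enumeration of all closed terms. Let $E$ be a sentence containing only weak quantifier occurrences. In every term structure there is an $n$ such that $\|E_m\|=\|E\|$ for all $m\ge n$.
   Context: The propositional setting is as follows. - A lattice-oriented signature $\mathcal{L}$ is a finite set of connectives. Each connective $c$ has an arity $n_c$ and a polarity $p_c:\{1,\dots,n_c\}\to\{-,+\}$. It includes binary $\lor,\land,\to$ with $p_\lor\equiv p_\land\equiv +$, $p_\to(1)=-$ and $p_\to(2)=+$. - A finite $\mathcal{L}$-lattice $\mathbf{A}$ is a finite set $L$ with operations $c^L$ such that $(L,\lor^L,\land^L)$ is a lattice with order $\le$ and top $1$. Each $c^L$ is monotone in the arguments with polarity $+$ and antitone in those with polarity $-$. Moreover $1\le a\to b$ iff $a\le b$. The first-order setting is as follows. - Fix a finite $\mathcal{L}$-lattice $\mathbf{A}$ and a predicate language with predicate and function symbols of given arities. - Terms and formulas are built as usual from object variables using the connectives of $\mathcal{L}$ and the quantifiers $\forall,\exists$. - A structure consists of a nonempty set $S$, maps $P^S:S^n\to L$ for the $n$-ary predicate symbols, and maps $f^S:S^n\to S$ for the $n$-ary function symbols. - An evaluation $v$ maps variables to $S$. Formulas get values in $L$: connectives are interpreted by $c^L$; $\|\forall x\varphi\|_v=\bigwedge_{a\in S}\|\varphi\|_{v[x\to a]}$ and $\|\exists x\varphi\|_v=\bigvee_{a\in S}\|\varphi\|_{v[x\to a]}$. - A term structure is a structure whose domain $S$ is the set of all closed terms, with each function symbol interpreted as the corresponding term constructor. -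 An occurrence in a formula is positive or negative: the whole formula is positive, and going into argument $i$ of a connective $c$ keeps the polarity if $p_c(i)=+$ and flips it if $p_c(i)=-$. Quantifiers do not change polarity. - Weak quantifier occurrences are positive occurrences of $\exists$ and negative occurrences of $\forall$; strong ones are positive $\forall$ and negative $\exists$. - The $n$-th expansion $E_n$ of $E$ is obtained by replacing, from the inside out, every subformula $\exists xA(x)$ by $\bigvee_{i=1}^nA(t_i)$ and every subformula $\forall xA(x)$ by $\bigwedge_{i=1}^nA(t_i)$. *)

theory Defs
  imports Main
begin

datatype ('f, 'v) trm = Var 'v | Fn 'f "('f, 'v) trm list"

datatype ('c, 'p, 'f, 'v) form =
    Pred 'p "('f, 'v) trm list"
  | Conn 'c "('c, 'p, 'f, 'v) form list"
  | All 'v "('c, 'p, 'f, 'v) form"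
  | Ex 'v "('c, 'p, 'f, 'v) form"

fun wf_trm :: "('f \<Rightarrow> nat) \<Rightarrow> ('f, 'v) trm \<Rightarrow> bool" where
  "wf_trm fa (Var x) = True"
| "wf_trm fa (Fn f ts) = (length ts = fa f \<and> (\<forall>t \<in> set ts. wf_trm fa t))"

fun vars_trm :: "('f, 'v) trm \<Rightarrow> 'v set" where
  "vars_trm (Var x) = {x}"
| "vars_trm (Fn f ts) = (\<Union>t \<in> set ts. vars_trm t)"

text \<open>Closed (well-formed, variable-free) terms: the domain of a term structure.\<close>
definition closed_terms :: "('f \<Rightarrow> nat) \<Rightarrow> ('f, 'v) trm set" where
  "closed_terms fa = {t. wf_trm fa t \<and> vars_trm t = {}}"

fun wf_form :: "('c \<Rightarrow> nat) \<Rightarrow> ('p \<Rightarrow> nat) \<Rightarrow> ('f \<Rightarrow> nat) \<Rightarrow> ('c, 'p, 'f, 'v) form \<Rightarrow> bool" where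
  "wf_form ca pa fa (Pred p ts) = (length ts = pa p \<and> (\<forall>t \<in> set ts. wf_trm fa t))"
| "wf_form ca pa fa (Conn c As) = (length As = ca c \<and> (\<forall>A \<in> set As. wf_form ca pa fa A))"
| "wf_form ca pa fa (All x A) = wf_form ca pa fa A"
| "wf_form ca pa fa (Ex x A) = wf_form ca pa fa A"

fun free_vars :: "('c, 'p, 'f, 'v) form \<Rightarrow> 'v set" where
  "free_vars (Pred p ts) = (\<Union>t \<in> set ts. vars_trm t)"
| "free_vars (Conn c As) = (\<Union>A \<in> set As. free_vars A)"
| "free_vars (All x A) = free_vars A - {x}"
| "free_vars (Ex x A) = free_vars A - {x}"

definition sentence :: "('c \<Rightarrow> nat) \<Rightarrow> ('p \<Rightarrow> nat) \<Rightarrow> ('f \<Rightarrow> nat) \<Rightarrow> ('c, 'p, 'f, 'v) form \<Rightarrow> bool" where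
  "sentence ca pa fa A = (wf_form ca pa fa A \<and> free_vars A = {})"

text \<open>Signature: connectives 'c (a finite type), arity ca, polarity pol
  (pol c i = True means polarity + of argument i, arguments indexed 0..ca c - 1),
  with distinguished binary connectives cdisj, cconj, cimp.
  The algebra: a finite type 'l carrying its lattice order, and the interpretation
  I c of each connective.  (Every finite lattice is complete, so we use the class
  complete_lattice to have Inf/Sup available for the quantifiers.)\<close>
definition L_lattice ::
  "('c::finite \<Rightarrow> nat) \<Rightarrow> ('c \<Rightarrow> nat \<Rightarrow> bool) \<Rightarrow> 'c \<Rightarrow> 'c \<Rightarrow> 'c
   \<Rightarrow> ('c \<Rightarrow> 'l::{finite,complete_lattice} list \<Rightarrow> 'l) \<Rightarrow> bool" where
  "L_lattice ca pol cdisj cconj cimp I \<longleftrightarrow>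
     distinct [cdisj, cconj, cimp] \<and>
     ca cdisj = 2 \<and> ca cconj = 2 \<and> ca cimp = 2 \<and>
     pol cdisj 0 \<and> pol cdisj 1 \<and> pol cconj 0 \<and> pol cconj 1 \<and>
     \<not> pol cimp 0 \<and> pol cimp 1 \<and>
     (\<forall>a b. I cdisj [a, b] = sup a b) \<and>
     (\<forall>a b. I cconj [a, b] = inf a b) \<and>
     (\<forall>c xs i a b. length xs = ca c \<and> i < ca c \<and> a \<le> b \<longrightarrow>
        (if pol c i then I c (xs[i := a]) \<le> I c (xs[i := b])
                    else I c (xs[i := b]) \<le> I c (xs[i := a]))) \<and>
     (\<forall>a b. top \<le> I cimp [a, b] \<longleftrightarrow> a \<le> b)"

text \<open>In a term structure the value of a term under an evaluation v (mapping
  variables to closed terms) is the term obtained by substitution.\<close>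
fun subst_trm :: "('v \<Rightarrow> ('f, 'v) trm) \<Rightarrow> ('f, 'v) trm \<Rightarrow> ('f, 'v) trm" where
  "subst_trm v (Var x) = v x"
| "subst_trm v (Fn f ts) = Fn f (map (subst_trm v) ts)"

fun eval_ts ::
  "('f \<Rightarrow> nat) \<Rightarrow> ('c \<Rightarrow> 'l::complete_lattice list \<Rightarrow> 'l) \<Rightarrow> ('p \<Rightarrow> ('f, 'v) trm list \<Rightarrow> 'l)
   \<Rightarrow> ('v \<Rightarrow> ('f, 'v) trm) \<Rightarrow> ('c, 'p, 'f, 'v) form \<Rightarrow> 'l" where
  "eval_ts fa I P v (Pred p ts) = P p (map (subst_trm v) ts)"
| "eval_ts fa I P v (Conn c As) = I c (map (eval_ts fa I P v) As)"
| "eval_ts fa I P v (All x A) = Inf ((\<lambda>a. eval_ts fa I P (v(x := a)) A) ` closed_terms fa)"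
| "eval_ts fa I P v (Ex x A) = Sup ((\<lambda>a. eval_ts fa I P (v(x := a)) A) ` closed_terms fa)"

text \<open>only_weak pol pos A: every quantifier occurrence in A is weak, where pos is
  the polarity of the position of A (True = positive).\<close>
function only_weak :: "('c \<Rightarrow> nat \<Rightarrow> bool) \<Rightarrow> bool \<Rightarrow> ('c, 'p, 'f, 'v) form \<Rightarrow> bool" where
  "only_weak pol pos (Pred p ts) = True"
| "only_weak pol pos (Conn c As) =
     (\<forall>(i, A) \<in> set (zip [0..<length As] As).
        only_weak pol (if pol c i then pos else \<not> pos) A)"
| "only_weak pol pos (All x A) = (\<not> pos \<and> only_weak pol pos A)"
| "only_weak pol pos (Ex x A) = (pos \<and> only_weak pol pos A)"
  by pat_completeness auto
termination
  by (relation "measure (\<lambda>(_, _, A). size A)")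
     (auto dest!: set_zip_rightD simp: less_Suc_eq_le intro: size_list_estimation')

fun subst_form :: "'v \<Rightarrow> ('f, 'v) trm \<Rightarrow> ('c, 'p, 'f, 'v) form \<Rightarrow> ('c, 'p, 'f, 'v) form" where
  "subst_form x s (Pred p ts) = Pred p (map (subst_trm (Var(x := s))) ts)"
| "subst_form x s (Conn c As) = Conn c (map (subst_form x s) As)"
| "subst_form x s (All y A) = (if y = x then All y A else All y (subst_form x s A))"
| "subst_form x s (Ex y A) = (if y = x then Ex y A else Ex y (subst_form x s A))"

fun big_conn :: "'c \<Rightarrow> ('c, 'p, 'f, 'v) form list \<Rightarrow> ('c, 'p, 'f, 'v) form" where
  "big_conn c [] = Conn c []"
| "big_conn c [A] = A"
| "big_conn c (A # B # As) = Conn c [A, big_conn c (B # As)]"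

fun expansion :: "'c \<Rightarrow> 'c \<Rightarrow> (nat \<Rightarrow> ('f, 'v) trm) \<Rightarrow> nat
   \<Rightarrow> ('c, 'p, 'f, 'v) form \<Rightarrow> ('c, 'p, 'f, 'v) form" where
  "expansion cdisj cconj t n (Pred p ts) = Pred p ts"
| "expansion cdisj cconj t n (Conn c As) = Conn c (map (expansion cdisj cconj t n) As)"
| "expansion cdisj cconj t n (All x A) =
     big_conn cconj (map (\<lambda>i. subst_form x (t i) (expansion cdisj cconj t n A)) [1..<n+1])"
| "expansion cdisj cconj t n (Ex x A) =
     big_conn cdisj (map (\<lambda>i. subst_form x (t i) (expansion cdisj cconj t n A)) [1..<n+1])"

end

theory Submission
  imports Defs
begin

text \<open>
  Expanding a positive \<open>\<exists>\<close> into a finite disjunction over instances, or a negative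
  \<open>\<forall>\<close> into a finite conjunction, can only move the value of the whole formula
  downwards, since every connective is monotone or antitone according to its polarity;
  so \<open>\<parallel>E\<^sub>m\<parallel> \<le> \<parallel>E\<parallel>\<close> for all \<open>m \<ge> 1\<close>.  Conversely, the lattice is finite, so each
  supremum or infimum over the closed terms is attained on finitely many of them, and
  these all occur among \<open>t\<^sub>1, \<dots>, t\<^sub>m\<close> once \<open>m\<close> is large; by induction on the formula
  the value of the expansion is therefore eventually exact.  For a sentence the value
  does not depend on the evaluation, which makes the threshold uniform.
\<close>

lemma subst_trm_closed: "vars_trm s = {} \<Longrightarrow> subst_trm v s = s"
  by (induction s) (auto intro: map_idI)

lemma subst_trm_Var_upd:
  "vars_trm s = {} \<Longrightarrow> subst_trm v (subst_trm (Var(x := s)) u) = subst_trm (v(x := s)) u"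
  by (induction u) (auto simp: subst_trm_closed)

lemma eval_ts_subst_form:
  "vars_trm s = {} \<Longrightarrow> eval_ts fa I P v (subst_form x s B) = eval_ts fa I P (v(x := s)) B"
  by (induction B arbitrary: v) (simp_all add: subst_trm_Var_upd fun_upd_twist comp_def cong: map_cong)

lemma subst_trm_cong: "(\<And>x. x \<in> vars_trm u \<Longrightarrow> v x = w x) \<Longrightarrow> subst_trm v u = subst_trm w u"
  by (induction u) auto

lemma eval_ts_cong:
  "(\<And>x. x \<in> free_vars B \<Longrightarrow> v x = w x) \<Longrightarrow> eval_ts fa I P v B = eval_ts fa I P w B"
proof (induction B arbitrary: v w)
  case (Pred p ts)
  have "v x = w x" if "x \<in> vars_trm u" and "u \<in> set ts" for x u
    using that by (intro Pred.prems) auto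
  then have "map (subst_trm v) ts = map (subst_trm w) ts"
    by (intro map_cong refl subst_trm_cong)
  then show ?case
    by (simp only: eval_ts.simps)
next
  case (Conn c As)
  have "eval_ts fa I P v A = eval_ts fa I P w A" if "A \<in> set As" for A
    using that by (intro Conn.IH Conn.prems) auto
  then have "map (eval_ts fa I P v) As = map (eval_ts fa I P w) As"
    by simp
  then show ?case
    by (simp only: eval_ts.simps)
next
  case (All y B)
  have "eval_ts fa I P (v(y := a)) B = eval_ts fa I P (w(y := a)) B" for a
    using All by (intro All.IH) auto
  then show ?case
    by simp
next
  case (Ex y B)
  have "eval_ts fa I P (v(y := a)) B = eval_ts fa I P (w(y := a)) B" for a
    using Ex by (intro Ex.IH) auto
  then show ?case
    by simp
qed

lemma vars_trm_subst_trm: "vars_trm s = {} \<Longrightarrow> vars_trm (subst_trm (Var(x := s)) u) \<subseteq> vars_trm u - {x}"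
  by (induction u) auto

lemma free_vars_subst_form: "vars_trm s = {} \<Longrightarrow> free_vars (subst_form x s B) \<subseteq> free_vars B - {x}"
proof (induction B)
  case (Pred p ts)
  then show ?case using vars_trm_subst_trm by fastforce
qed auto

lemma free_vars_big_conn: "free_vars (big_conn c Bs) \<subseteq> (\<Union>B\<in>set Bs. free_vars B)"
  by (induction c Bs rule: big_conn.induct) auto

lemma free_vars_expansion:
  assumes "\<And>i. i \<ge> 1 \<Longrightarrow> vars_trm (t i) = {}"
  shows "free_vars (expansion cd cc t m A) \<subseteq> free_vars A"
proof (induction A)
  case (All x A)
  then show ?case using free_vars_big_conn[of cc] free_vars_subst_form[OF assms] by fastforce
next
  case (Ex x A)
  then show ?case using free_vars_big_conn[of cd] free_vars_subst_form[OF assms] by fastforce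
qed auto

lemma eval_big_conn_sup:
  assumes "\<And>a b. I c [a, b] = sup a b" and "Bs \<noteq> []"
  shows "eval_ts fa I P v (big_conn c Bs) = Sup (eval_ts fa I P v ` set Bs)"
  using assms(2) by (induction Bs rule: list_nonempty_induct) (auto simp: assms(1) neq_Nil_conv)

lemma eval_big_conn_inf:
  assumes "\<And>a b. I c [a, b] = inf a b" and "Bs \<noteq> []"
  shows "eval_ts fa I P v (big_conn c Bs) = Inf (eval_ts fa I P v ` set Bs)"
  using assms(2) by (induction Bs rule: list_nonempty_induct) (auto simp: assms(1) neq_Nil_conv)

lemma eventually_SUP_le_SUP_atLeastAtMost:
  fixes g :: "nat \<Rightarrow> 'l::complete_lattice"
  assumes "finite (g ` {1..})" and "\<And>i. i \<ge> 1 \<Longrightarrow> eventually (\<lambda>m. f m i = g i) sequentially"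
  shows "eventually (\<lambda>m. (SUP i\<in>{1..}. g i) \<le> (SUP i\<in>{1..m}. f m i)) sequentially"
proof -
  have "eventually (\<lambda>m. g i \<le> (SUP j\<in>{1..m}. f m j)) sequentially" if "i \<ge> 1" for i
    using eventually_conj[OF assms(2)[OF that] eventually_ge_at_top[of i]]
    by eventually_elim (metis SUP_upper atLeastAtMost_iff that)
  then have "eventually (\<lambda>m. \<forall>y\<in>g ` {1..}. y \<le> (SUP j\<in>{1..m}. f m j)) sequentially"
    by (intro eventually_ball_finite[OF assms(1)]) auto
  then show ?thesis
    by eventually_elim (blast intro: SUP_least)
qed

lemma eventually_INF_atLeastAtMost_le_INF:
  fixes g :: "nat \<Rightarrow> 'l::complete_lattice"
  assumes "finite (g ` {1..})" and "\<And>i. i \<ge> 1 \<Longrightarrow> eventually (\<lambda>m. f m i = g i) sequentially"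
  shows "eventually (\<lambda>m. (INF i\<in>{1..m}. f m i) \<le> (INF i\<in>{1..}. g i)) sequentially"
proof -
  have "eventually (\<lambda>m. (INF j\<in>{1..m}. f m j) \<le> g i) sequentially" if "i \<ge> 1" for i
    using eventually_conj[OF assms(2)[OF that] eventually_ge_at_top[of i]]
    by eventually_elim (metis INF_lower atLeastAtMost_iff that)
  then have "eventually (\<lambda>m. \<forall>y\<in>g ` {1..}. (INF j\<in>{1..m}. f m j) \<le> y) sequentially"
    by (intro eventually_ball_finite[OF assms(1)]) auto
  then show ?thesis
    by eventually_elim (blast intro: INF_greatest)
qed

definition pol_le :: "bool \<Rightarrow> 'a::order \<Rightarrow> 'a \<Rightarrow> bool" where
  "pol_le pos a b \<longleftrightarrow> (if pos then a \<le> b else b \<le> a)"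

lemma pol_le_Not: "pol_le (\<not> pos) a b \<longleftrightarrow> pol_le pos b a"
  by (simp add: pol_le_def)

lemma only_weak_Conn_nth:
  assumes "only_weak pol pos (Conn c As)" and "i < length As"
  shows "only_weak pol (pol c i = pos) (As ! i)"
proof -
  have "(i, As ! i) \<in> set (zip [0..<length As] As)"
    using assms(2) by (force simp: set_zip)
  then show ?thesis
    using assms(1) by (auto split: if_splits)
qed

lemma vars_trm_enum: "t ` {1..} = closed_terms fa \<Longrightarrow> i \<ge> 1 \<Longrightarrow> vars_trm (t i) = {}"
  by (auto simp: closed_terms_def)

lemma eval_ts_Ex_enum:
  assumes "t ` {1..} = closed_terms fa"
  shows "eval_ts fa I P v (Ex x A) = (SUP i\<in>{1..}. eval_ts fa I P (v(x := t i)) A)"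
  by (simp add: assms[symmetric] image_image)

lemma eval_ts_All_enum:
  assumes "t ` {1..} = closed_terms fa"
  shows "eval_ts fa I P v (All x A) = (INF i\<in>{1..}. eval_ts fa I P (v(x := t i)) A)"
  by (simp add: assms[symmetric] image_image)

context
  fixes ca :: "'c::finite \<Rightarrow> nat" and pol :: "'c \<Rightarrow> nat \<Rightarrow> bool" and cdisj cconj cimp :: 'c
    and I :: "'c \<Rightarrow> 'l::{finite,complete_lattice} list \<Rightarrow> 'l"
  assumes L: "L_lattice ca pol cdisj cconj cimp I"
begin

lemma I_cdisj: "I cdisj [a, b] = sup a b"
  using L by (simp add: L_lattice_def)

lemma I_cconj: "I cconj [a, b] = inf a b"
  using L by (simp add: L_lattice_def)

lemma I_mono_update:
  assumes "length xs = ca c" and "i < ca c" and "pol_le (pol c i) a b"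
  shows "I c (xs[i := a]) \<le> I c (xs[i := b])"
  using L assms unfolding L_lattice_def pol_le_def by (cases "pol c i") auto

lemma I_mono_pointwise:
  assumes len: "length xs = ca c" "length ys = ca c"
    and le: "\<And>i. i < ca c \<Longrightarrow> pol_le (pol c i) (xs ! i) (ys ! i)"
  shows "I c xs \<le> I c ys"
proof -
  \<comment> \<open>replace the arguments of xs by those of ys one at a time, from left to right\<close>
  have "I c xs \<le> I c (take k ys @ drop k xs)" if "k \<le> ca c" for k
    using that
  proof (induction k)
    case (Suc k)
    let ?z = "take k ys @ drop k xs"
    have "?z[k := xs ! k] = ?z" and "?z[k := ys ! k] = take (Suc k) ys @ drop (Suc k) xs"
      using Suc.prems len
      by (simp_all add: take_Suc_conv_app_nth list_update_append Cons_nth_drop_Suc[symmetric])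
    moreover have "I c (?z[k := xs ! k]) \<le> I c (?z[k := ys ! k])"
      using Suc.prems len by (intro I_mono_update le) auto
    ultimately show ?case
      using Suc by (metis Suc_leD order_trans)
  qed simp
  from this[of "ca c"] show ?thesis
    using len by simp
qed

context
  fixes fa :: "'f \<Rightarrow> nat" and t :: "nat \<Rightarrow> ('f, 'v) trm"
  assumes enum: "t ` {1..} = closed_terms fa"
begin

lemma eval_expansion_Ex:
  assumes "m \<ge> 1"
  shows "eval_ts fa I P v (expansion cdisj cconj t m (Ex x A))
    = (SUP i\<in>{1..m}. eval_ts fa I P (v(x := t i)) (expansion cdisj cconj t m A))"
proof -
  have "eval_ts fa I P v (expansion cdisj cconj t m (Ex x A))
      = (SUP i\<in>set [1..<m+1]. eval_ts fa I P v (subst_form x (t i) (expansion cdisj cconj t m A)))"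
    using assms by (simp add: eval_big_conn_sup[where I = I and c = cdisj, OF I_cdisj] image_image)
  also have "set [1..<m+1] = {1..m}"
    by auto
  finally show ?thesis
    by (simp add: eval_ts_subst_form vars_trm_enum[OF enum])
qed

lemma eval_expansion_All:
  assumes "m \<ge> 1"
  shows "eval_ts fa I P v (expansion cdisj cconj t m (All x A))
    = (INF i\<in>{1..m}. eval_ts fa I P (v(x := t i)) (expansion cdisj cconj t m A))"
proof -
  have "eval_ts fa I P v (expansion cdisj cconj t m (All x A))
      = (INF i\<in>set [1..<m+1]. eval_ts fa I P v (subst_form x (t i) (expansion cdisj cconj t m A)))"
    using assms by (simp add: eval_big_conn_inf[where I = I and c = cconj, OF I_cconj] image_image)
  also have "set [1..<m+1] = {1..m}"
    by auto
  finally show ?thesis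
    by (simp add: eval_ts_subst_form vars_trm_enum[OF enum])
qed

lemma expansion_pol_le:
  assumes "wf_form ca pa fa A" and "only_weak pol pos A" and "m \<ge> 1"
  shows "pol_le pos (eval_ts fa I P v (expansion cdisj cconj t m A)) (eval_ts fa I P v A)"
  using assms(1,2)
proof (induction A arbitrary: pos v)
  case (Pred p ts)
  then show ?case by (simp add: pol_le_def)
next
  case (Conn c As)
  let ?e = "map (eval_ts fa I P v) (map (expansion cdisj cconj t m) As)"
    and ?a = "map (eval_ts fa I P v) As"
  have len: "length As = ca c"
    using Conn.prems(1) by simp
  have IH: "pol_le (pol c i = pos) (?e ! i) (?a ! i)" if "i < ca c" for i
  proof -
    have "only_weak pol (pol c i = pos) (As ! i)"
      using Conn.prems(2) that len by (intro only_weak_Conn_nth) auto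
    then show ?thesis
      using Conn.IH[OF nth_mem] Conn.prems(1) that len by simp
  qed
  show ?case
  proof (cases pos)
    case True
    then have "I c ?e \<le> I c ?a"
      using IH len by (intro I_mono_pointwise) force+
    with True show ?thesis unfolding pol_le_def by simp
  next
    case False
    then have "I c ?a \<le> I c ?e"
      using IH len pol_le_Not by (intro I_mono_pointwise) force+
    with False show ?thesis unfolding pol_le_def by simp
  qed
next
  case (Ex x A)
  then have "pos" and "eval_ts fa I P v' (expansion cdisj cconj t m A) \<le> eval_ts fa I P v' A" for v'
    by (auto simp: pol_le_def)
  moreover from this(2) have "(SUP i\<in>{1..m}. eval_ts fa I P (v(x := t i)) (expansion cdisj cconj t m A))
      \<le> (SUP i\<in>{1..}. eval_ts fa I P (v(x := t i)) A)"
    by (intro SUP_mono) auto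
  ultimately show ?case
    unfolding pol_le_def eval_expansion_Ex[OF assms(3)] eval_ts_Ex_enum[OF enum] by simp
next
  case (All x A)
  then have "\<not> pos" and "eval_ts fa I P v' A \<le> eval_ts fa I P v' (expansion cdisj cconj t m A)" for v'
    by (auto simp: pol_le_def)
  moreover from this(2) have "(INF i\<in>{1..}. eval_ts fa I P (v(x := t i)) A)
      \<le> (INF i\<in>{1..m}. eval_ts fa I P (v(x := t i)) (expansion cdisj cconj t m A))"
    by (intro INF_mono) auto
  ultimately show ?case
    unfolding pol_le_def eval_expansion_All[OF assms(3)] eval_ts_All_enum[OF enum] by simp
qed

lemma eventually_expansion_eq:
  assumes "wf_form ca pa fa A" and "only_weak pol pos A"
  shows "eventually (\<lambda>m. eval_ts fa I P v (expansion cdisj cconj t m A) = eval_ts fa I P v A) sequentially"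
  using assms
proof (induction A arbitrary: pos v)
  case (Pred p ts)
  then show ?case by simp
next
  case (Conn c As)
  have "eventually (\<lambda>m. eval_ts fa I P v (expansion cdisj cconj t m B) = eval_ts fa I P v B) sequentially"
    if B: "B \<in> set As" for B
  proof -
    obtain i where i: "i < length As" and B_eq: "B = As ! i"
      using B by (auto simp: in_set_conv_nth)
    have "wf_form ca pa fa B"
      using Conn.prems(1) B by simp
    moreover have "only_weak pol (pol c i = pos) B"
      unfolding B_eq using Conn.prems(2) i by (rule only_weak_Conn_nth)
    ultimately show ?thesis
      by (rule Conn.IH[OF B])
  qed
  then have "eventually (\<lambda>m. \<forall>B\<in>set As.
      eval_ts fa I P v (expansion cdisj cconj t m B) = eval_ts fa I P v B) sequentially"
    by (intro eventually_ball_finite) auto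
  then show ?case
  proof eventually_elim
    case (elim m)
    then have "map (eval_ts fa I P v) (map (expansion cdisj cconj t m) As) = map (eval_ts fa I P v) As"
      by simp
    then show ?case
      by (simp only: expansion.simps eval_ts.simps)
  qed
next
  case (Ex x A)
  from Ex.prems have wf: "wf_form ca pa fa A" and ow: "only_weak pol True A" and pos
    by auto
  have "eventually (\<lambda>m. (SUP i\<in>{1..}. eval_ts fa I P (v(x := t i)) A)
      \<le> (SUP i\<in>{1..m}. eval_ts fa I P (v(x := t i)) (expansion cdisj cconj t m A))) sequentially"
    using Ex.IH[OF wf ow] by (intro eventually_SUP_le_SUP_atLeastAtMost) auto
  moreover have "eventually (\<lambda>m. m \<ge> 1) sequentially"
    by simp
  ultimately show ?case
  proof eventually_elim
    case (elim m)
    have "eval_ts fa I P v (expansion cdisj cconj t m (Ex x A)) \<le> eval_ts fa I P v (Ex x A)"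
      using expansion_pol_le[OF Ex.prems elim(2)] \<open>pos\<close> by (simp only: pol_le_def if_True)
    moreover have "eval_ts fa I P v (Ex x A) \<le> eval_ts fa I P v (expansion cdisj cconj t m (Ex x A))"
      using elim(1) unfolding eval_ts_Ex_enum[OF enum] eval_expansion_Ex[OF elim(2)] .
    ultimately show ?case
      by (rule antisym)
  qed
next
  case (All x A)
  from All.prems have wf: "wf_form ca pa fa A" and ow: "only_weak pol False A" and "\<not> pos"
    by auto
  have "eventually (\<lambda>m. (INF i\<in>{1..m}. eval_ts fa I P (v(x := t i)) (expansion cdisj cconj t m A))
      \<le> (INF i\<in>{1..}. eval_ts fa I P (v(x := t i)) A)) sequentially"
    using All.IH[OF wf ow] by (intro eventually_INF_atLeastAtMost_le_INF) auto
  moreover have "eventually (\<lambda>m. m \<ge> 1) sequentially"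
    by simp
  ultimately show ?case
  proof eventually_elim
    case (elim m)
    have "eval_ts fa I P v (expansion cdisj cconj t m (All x A)) \<le> eval_ts fa I P v (All x A)"
      using elim(1) unfolding eval_ts_All_enum[OF enum] eval_expansion_All[OF elim(2)] .
    moreover have "eval_ts fa I P v (All x A) \<le> eval_ts fa I P v (expansion cdisj cconj t m (All x A))"
      using expansion_pol_le[OF All.prems elim(2)] \<open>\<not> pos\<close> by (simp only: pol_le_def if_False)
    ultimately show ?case
      by (rule antisym)
  qed
qed

end

end

theorem mainTheorem15:
  fixes ca :: "'c::finite \<Rightarrow> nat" and pol :: "'c \<Rightarrow> nat \<Rightarrow> bool"
    and cdisj cconj cimp :: 'c
    and I :: "'c \<Rightarrow> 'l::{finite,complete_lattice} list \<Rightarrow> 'l"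
    and pa :: "'p \<Rightarrow> nat" and fa :: "'f \<Rightarrow> nat"
    and t :: "nat \<Rightarrow> ('f, 'v) trm"
    and E :: "('c, 'p, 'f, 'v) form"
    and P :: "'p \<Rightarrow> ('f, 'v) trm list \<Rightarrow> 'l"
  assumes "L_lattice ca pol cdisj cconj cimp I"
    and "\<exists>f. fa f = 0"
    and "t ` {1..} = closed_terms fa"
    and "sentence ca pa fa E"
    and "only_weak pol True E"
  shows "\<exists>n\<ge>1. \<forall>m\<ge>n. \<forall>v. (\<forall>x. v x \<in> closed_terms fa) \<longrightarrow>
           eval_ts fa I P v (expansion cdisj cconj t m E) = eval_ts fa I P v E"
proof -
  have wf: "wf_form ca pa fa E" and closed: "free_vars E = {}"
    using assms(4) by (simp_all add: sentence_def)
  have closed_expansion: "free_vars (expansion cdisj cconj t m E) = {}" for m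
    using free_vars_expansion[of t cdisj cconj m E, OF vars_trm_enum[OF assms(3)]] closed by simp
  define v\<^sub>0 :: "'v \<Rightarrow> ('f, 'v) trm" where "v\<^sub>0 = (\<lambda>_. t 1)"
  obtain N where N: "\<And>m. m \<ge> N \<Longrightarrow>
      eval_ts fa I P v\<^sub>0 (expansion cdisj cconj t m E) = eval_ts fa I P v\<^sub>0 E"
    using eventually_expansion_eq[OF assms(1,3) wf assms(5)] unfolding eventually_sequentially by blast
  have "eval_ts fa I P v (expansion cdisj cconj t m E) = eval_ts fa I P v E" if "m \<ge> N" for m v
  proof -
    have "eval_ts fa I P v (expansion cdisj cconj t m E) = eval_ts fa I P v\<^sub>0 (expansion cdisj cconj t m E)"
      by (rule eval_ts_cong) (simp add: closed_expansion)
    also have "\<dots> = eval_ts fa I P v\<^sub>0 E"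
      using N[OF that] .
    also have "\<dots> = eval_ts fa I P v E"
      by (rule eval_ts_cong) (simp add: closed)
    finally show ?thesis .
  qed
  then show ?thesis
    by (intro exI[of _ "max N 1"] conjI allI impI) simp_all
qed

end
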